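(* Suppose $X$ has well-defined scattered $\Pi_1$-products, $\kappa$ is a countable limit ordinal, and $\{A_\lambda\}_{\lambda<\kappa}$ is a transfinite sequence of homotopy cut-sets for paths $\alpha,\beta:[0,1]\to X$ such that (1) $A_{\lambda+1}\subseteq A_\lambda$ for all $\lambda<\kappa$; (2) $A_\lambda=\bigcap_{\mu<\lambda}A_\mu$ for every limit ordinal $\lambda<\kappa$; (3) whenever $(c,d)\in\mathcal{I}(A_{\lambda+1})$ contains $(a,b)\in\mathcal{I}(A_\lambda)$, we have $\alpha|_{[c,a]}\simeq\beta|_{[c,a]}$ if $c<a$ and $\alpha|_{[b,d]}\simeq\beta|_{[b,d]}$ if $b<d$. Then $A_\kappa=\bigcap_{\lambda<\kappa}A_\lambda$ is a homotopy cut-set for $\alpha$ and $\beta$.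
   Context: $\simeq$ is path-homotopy. For a compact set $A\subseteq\mathbb{R}$, $\mathcal{I}(A)$ is the set of connected components of $[\min A,\max A]\setminus A$. For paths $\alpha,\beta:[s,t]\to X$, a set $A\subseteq[s,t]$ is a homotopy cut-set for $\alpha,\beta$ if $A$ is closed, nowhere dense, contains $\{s,t\}$, $\alpha|_A=\beta|_A$, and $\alpha|_{[a,b]}\simeq\beta|_{[a,b]}$ for every $(a,b)\in\mathcal{I}(A)$. $X$ has well-defined scattered $\Pi_1$-products if any two paths $[0,1]\to X$ admitting a scattered homotopy cut-set are path-homotopic. *)

theory Defs
  imports "HOL-Analysis.Analysis"
begin

definition scattered_set :: "real set \<Rightarrow> bool" where
  "scattered_set A \<longleftrightarrow>
     (\<forall>B\<subseteq>A. B \<noteq> {} \<longrightarrow> (\<exists>x\<in>B. \<exists>e>0. ball x e \<inter> B = {x}))"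

definition gap_intervals :: "real set \<Rightarrow> (real \<times> real) set" where
  "gap_intervals A = (\<lambda>C. (Inf C, Sup C)) ` components ({Inf A..Sup A} - A)"

text \<open>Restriction of a path to [a,b], reparametrised affinely over [0,1]
  (same as the library's subpath, which requires a normed vector space).\<close>
definition restr_path :: "real \<Rightarrow> real \<Rightarrow> (real \<Rightarrow> 'a) \<Rightarrow> real \<Rightarrow> 'a" where
  "restr_path a b g = (\<lambda>x. g ((b - a) * x + a))"

definition homotopy_cut_set :: "'a::topological_space set \<Rightarrow> (real \<Rightarrow> 'a) \<Rightarrow> (real \<Rightarrow> 'a) \<Rightarrow> real set \<Rightarrow> bool" where
  "homotopy_cut_set S \<alpha> \<beta> A \<longleftrightarrow>
     closed A \<and> A \<subseteq> {0..1} \<and> interior (closure A) = {} \<and> 0 \<in> A \<and> 1 \<in> A \<and>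
     (\<forall>x\<in>A. \<alpha> x = \<beta> x) \<and>
     (\<forall>(a,b)\<in>gap_intervals A. homotopic_paths S (restr_path a b \<alpha>) (restr_path a b \<beta>))"

definition well_defined_scattered_products :: "'a::topological_space set \<Rightarrow> bool" where
  "well_defined_scattered_products S \<longleftrightarrow>
     (\<forall>\<alpha> \<beta>. path \<alpha> \<and> path_image \<alpha> \<subseteq> S \<and> path \<beta> \<and> path_image \<beta> \<subseteq> S \<and>
        (\<exists>A. scattered_set A \<and> homotopy_cut_set S \<alpha> \<beta> A) \<longrightarrow> homotopic_paths S \<alpha> \<beta>)"

end

theory Submission
  imports Defs
begin

text \<open>Let \<open>(a, b)\<close> be a gap of \<open>K = \<Inter>i. A i\<close> and pick \<open>t \<in> (a, b)\<close> outside the first set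
  of the family. For each stage \<open>i\<close> let \<open>(l i, r i)\<close> be the gap of \<open>A i\<close> containing \<open>t\<close>. The left
  ends decrease to \<open>a\<close>, the right ends increase to \<open>b\<close>, and by the limit condition both are
  continuous at limit stages. Hence \<open>{a, b} \<union> {l i} \<union> {r i}\<close> is a countable closed subset of
  \<open>[a, b]\<close>, and each of its gaps is either the first gap \<open>(l i\<^sub>0, r i\<^sub>0)\<close> or of the form
  \<open>(l (i + 1), l i)\<close> or \<open>(r i, r (i + 1))\<close>, where condition (3) provides the homotopy.
  Countable closed sets are scattered, so after rescaling \<open>[a, b]\<close> to \<open>[0, 1]\<close> the
  well-definedness of scattered products gives \<open>\<alpha>|[a,b] \<simeq> \<beta>|[a,b]\<close>.\<close>

section \<open>Gaps of closed sets of reals\<close>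

lemma open_connected_real_eq_interval:
  fixes X :: "real set"
  assumes "open X" "connected X" "bounded X" "X \<noteq> {}"
  shows "X = {Inf X<..<Sup X}"
proof
  have bdd: "bdd_below X" "bdd_above X"
    using \<open>bounded X\<close> by (simp_all add: bounded_imp_bdd_below bounded_imp_bdd_above)
  then have "X \<subseteq> {Inf X..Sup X}"
    by (auto intro: cInf_lower cSup_upper)
  from interior_mono[OF this] show "X \<subseteq> {Inf X<..<Sup X}"
    using interior_open[OF \<open>open X\<close>] by simp
  show "{Inf X<..<Sup X} \<subseteq> X"
  proof
    fix y assume "y \<in> {Inf X<..<Sup X}"
    then obtain x1 x2 where "x1 \<in> X" "x1 < y" "x2 \<in> X" "y < x2"
      using cInf_less_iff[OF \<open>X \<noteq> {}\<close> bdd(1)] less_cSup_iff[OF \<open>X \<noteq> {}\<close> bdd(2)] by auto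
    then show "y \<in> X"
      using \<open>connected X\<close> unfolding connected_iff_interval by (meson less_imp_le)
  qed
qed

definition is_gap :: "real set \<Rightarrow> real \<Rightarrow> real \<Rightarrow> bool" where
  "is_gap C p q \<longleftrightarrow> p < q \<and> p \<in> C \<and> q \<in> C \<and> {p<..<q} \<inter> C = {}"

lemma component_complement_eq_gap:
  fixes C :: "real set"
  assumes C: "closed C" "C \<subseteq> {lo..hi}" "lo \<in> C" "hi \<in> C"
    and X: "X \<in> components ({lo..hi} - C)"
  obtains p q where "X = {p<..<q}" "is_gap C p q"
proof -
  let ?U = "{lo..hi} - C"
  have XU: "X \<subseteq> ?U" and "X \<noteq> {}"
    using X by (simp_all add: in_components_subset in_components_nonempty)
  have "?U = {lo<..<hi} - C"
    using C by (auto simp: less_le)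
  then have "open ?U"
    using C(1) by (simp add: open_Diff)
  then have "open X"
    using X open_components by blast
  moreover have "bounded X"
    using XU bounded_subset[of "{lo..hi}"] by auto
  ultimately have X_eq: "X = {Inf X<..<Sup X}"
    using X \<open>X \<noteq> {}\<close> by (simp add: in_components_connected open_connected_real_eq_interval)
  define p q where "p = Inf X" and "q = Sup X"
  have X_pq: "X = {p<..<q}"
    using X_eq by (simp add: p_def q_def)
  then have lt: "p < q"
    using \<open>X \<noteq> {}\<close> by (metis greaterThanLessThan_empty_iff not_less)
  obtain T where T: "closed T" "X = ?U \<inter> T"
    using closedin_component[OF X] closedin_closed by metis
  have "closure X \<subseteq> T \<inter> {lo..hi}"
    using T XU by (intro closure_minimal) auto
  then have "p \<in> T \<inter> {lo..hi}" "q \<in> T \<inter> {lo..hi}"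
    using closure_greaterThanLessThan[OF lt] X_pq lt by auto
  moreover have "p \<notin> X" "q \<notin> X"
    using X_pq by auto
  ultimately have "p \<in> C" "q \<in> C"
    using T(2) by auto
  moreover have "{p<..<q} \<inter> C = {}"
    using XU X_pq by auto
  ultimately show thesis
    using that X_pq lt by (simp add: is_gap_def)
qed

lemma is_gap_nested_eq:
  assumes gap: "is_gap C p q" and gap': "is_gap C p' q'" and sub: "{p<..<q} \<subseteq> {p'<..<q'}"
  shows "p' = p \<and> q' = q"
proof -
  have "p < q"
    using gap by (simp add: is_gap_def)
  then obtain m where m: "p < m" "m < q"
    using dense by blast
  then have m': "p' < m" "m < q'"
    using sub by auto
  have "\<not> p < p'" "\<not> q' < q"
    using gap gap' m m' by (auto simp: is_gap_def disjoint_iff)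
  moreover have "\<not> p' < p" "\<not> q < q'"
    using gap gap' m m' by (auto simp: is_gap_def disjoint_iff)
  ultimately show ?thesis
    by simp
qed

lemma gap_intervals_iff_is_gap:
  fixes C :: "real set"
  assumes C: "closed C" "C \<subseteq> {lo..hi}" "lo \<in> C" "hi \<in> C"
  shows "(p, q) \<in> gap_intervals C \<longleftrightarrow> is_gap C p q"
proof -
  have bounds: "Inf C = lo" "Sup C = hi"
    using C by (auto intro!: cInf_eq_minimum cSup_eq_maximum)
  show ?thesis
  proof
    assume "(p, q) \<in> gap_intervals C"
    then obtain X where X: "X \<in> components ({lo..hi} - C)" "p = Inf X" "q = Sup X"
      unfolding gap_intervals_def bounds by auto
    then obtain p' q' where "X = {p'<..<q'}" "is_gap C p' q'"
      using component_complement_eq_gap[OF C] by blast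
    then show "is_gap C p q"
      using X by (simp add: is_gap_def)
  next
    assume gap: "is_gap C p q"
    moreover have "lo \<le> p" "q \<le> hi"
      using gap C(2) by (auto simp: is_gap_def)
    ultimately have "{p<..<q} \<subseteq> {lo..hi} - C" "{p<..<q} \<noteq> {}"
      by (auto simp: is_gap_def)
    then obtain X where X: "X \<in> components ({lo..hi} - C)" "{p<..<q} \<subseteq> X"
      using exists_component_superset[of "{p<..<q}" "{lo..hi} - C"] by (metis connected_Ioo subset_empty)
    then obtain p' q' where "X = {p'<..<q'}" "is_gap C p' q'"
      using component_complement_eq_gap[OF C] by blast
    then have "Inf X = p \<and> Sup X = q"
      using is_gap_nested_eq[OF gap] X(2) by (simp add: is_gap_def)
    then show "(p, q) \<in> gap_intervals C"
      unfolding gap_intervals_def bounds using X(1) by force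
  qed
qed

lemma is_gap_uminus: "is_gap (uminus ` C) p q \<longleftrightarrow> is_gap C (- q) (- p)"
proof -
  have "{p<..<q} \<inter> uminus ` C = uminus ` ({- q<..<- p} \<inter> C)"
    by (auto simp: image_iff minus_less_iff less_minus_iff)
  moreover have "x \<in> uminus ` C \<longleftrightarrow> - x \<in> C" for x
    using image_eqI[of x uminus "- x" C] by auto
  ultimately show ?thesis
    by (auto simp: is_gap_def)
qed

lemma is_gap_Un_cases:
  fixes L R :: "real set"
  assumes gap: "is_gap (L \<union> R) p q"
    and L: "L \<subseteq> {..l}" "l \<in> L" and R: "R \<subseteq> {r..}" "r \<in> R" and "l < r"
  shows "is_gap L p q \<or> is_gap R p q \<or> (p = l \<and> q = r)"
proof -
  have pq: "p < q" "p \<in> L \<union> R" "q \<in> L \<union> R" "{p<..<q} \<inter> (L \<union> R) = {}"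
    using gap by (simp_all add: is_gap_def)
  consider "q \<in> L" | "p \<in> R" | "p \<in> L" "q \<in> R"
    using pq by blast
  then show ?thesis
  proof cases
    case 1
    then have "p \<in> L"
      using pq L R \<open>l < r\<close> by fastforce
    with 1 show ?thesis
      using pq by (auto simp: is_gap_def)
  next
    case 2
    then have "q \<in> R"
      using pq L R \<open>l < r\<close> by fastforce
    with 2 show ?thesis
      using pq by (auto simp: is_gap_def)
  next
    case 3
    then have "p \<le> l" "r \<le> q"
      using L R by auto
    moreover have "l \<notin> {p<..<q}" "r \<notin> {p<..<q}"
      using pq L R by blast+
    ultimately show ?thesis
      using \<open>l < r\<close> by auto
  qed
qed

section \<open>Countable cut-sets\<close>

lemma countable_closed_has_isolated:
  fixes S :: "real set"
  assumes S: "closed S" "countable S" "S \<noteq> {}"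
  shows "\<exists>x. x isolated_in S"
proof (rule ccontr)
  assume none: "\<nexists>x. x isolated_in S"
  define G where "G = (\<lambda>x. S - {x}) ` S"
  have "S \<subseteq> closure (\<Inter>G)"
  proof (rule Baire[OF S(1)])
    show "countable G"
      using S(2) by (simp add: G_def)
    fix T assume "T \<in> G"
    then obtain x where x: "x \<in> S" "T = S - {x}"
      by (auto simp: G_def)
    have "x islimpt S"
      using none x isolated_in_islimpt_iff by blast
    then have "x \<in> closure T"
      using x(2) islimpt_in_closure by blast
    moreover have "S \<subseteq> insert x T"
      using x(2) by auto
    ultimately have "S \<subseteq> closure T"
      using closure_subset[of T] by auto
    moreover have "openin (top_of_set S) T"
      using x(2) by (simp add: openin_delete)
    ultimately show "openin (top_of_set S) T \<and> S \<subseteq> closure T"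
      by blast
  qed
  moreover have "\<Inter>G = {}"
  proof -
    have "y \<notin> \<Inter>G" for y
    proof
      assume y: "y \<in> \<Inter>G"
      obtain z where "z \<in> S"
        using S(3) by blast
      then have "S - {z} \<in> G"
        unfolding G_def by (rule imageI)
      then have "y \<in> S"
        using y by blast
      then have "S - {y} \<in> G"
        unfolding G_def by (rule imageI)
      then show False
        using y by blast
    qed
    then show ?thesis
      by blast
  qed
  ultimately show False
    using S(3) by simp
qed

lemma scattered_if_countable_closed:
  fixes C :: "real set"
  assumes "closed C" "countable C"
  shows "scattered_set C"
  unfolding scattered_set_def
proof (intro allI impI)
  fix B assume B: "B \<subseteq> C" "B \<noteq> {}"
  then have "closure B \<subseteq> C"
    using \<open>closed C\<close> by (simp add: closure_minimal)
  then have "countable (closure B)"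
    using \<open>countable C\<close> by (rule countable_subset)
  moreover have "closure B \<noteq> {}"
    using B by simp
  ultimately obtain x where "x isolated_in closure B"
    using countable_closed_has_isolated[OF closed_closure] by blast
  then obtain T where T: "x \<in> closure B" "open T" "T \<inter> closure B = {x}"
    by (rule isolated_inE)
  have "T \<inter> closure B \<subseteq> {x}" "T \<inter> B \<subseteq> T \<inter> closure B"
    using T(3) closure_subset[of B] by auto
  moreover have "T \<inter> B \<noteq> {}"
    using T open_Int_closure_eq_empty by blast
  ultimately have "x \<in> B"
    by blast
  obtain e where e: "e > 0" "ball x e \<subseteq> T"
    using T openE by blast
  then have "ball x e \<inter> B \<subseteq> {x}"
    using \<open>T \<inter> closure B \<subseteq> {x}\<close> \<open>T \<inter> B \<subseteq> T \<inter> closure B\<close> by blast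
  moreover have "x \<in> ball x e \<inter> B"
    using e \<open>x \<in> B\<close> by simp
  ultimately have "ball x e \<inter> B = {x}"
    by blast
  with \<open>x \<in> B\<close> \<open>e > 0\<close> show "\<exists>x\<in>B. \<exists>e>0. ball x e \<inter> B = {x}"
    by blast
qed

lemma interior_eq_empty_if_countable:
  fixes C :: "real set"
  assumes "countable C"
  shows "interior C = {}"
  using open_minus_countable[OF assms] interior_subset open_interior by blast

lemma restr_path_eq_comp_linepath: "restr_path a b g = g \<circ> linepath a b"
  by (auto simp: restr_path_def linepath_def algebra_simps)

lemma path_restr_path:
  assumes "path g" "a \<in> {0..1}" "b \<in> {0..1}"
  shows "path (restr_path a b g)" "path_image (restr_path a b g) \<subseteq> path_image g"
proof -
  have seg: "path_image (linepath a b) \<subseteq> {0..1}"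
    using assms(2,3) by (simp add: closed_segment_subset)
  have "continuous_on (path_image (linepath a b)) g"
    using assms(1) seg unfolding path_def by (rule continuous_on_subset)
  then show "path (restr_path a b g)"
    unfolding restr_path_eq_comp_linepath by (intro path_continuous_image) simp
  have "g ` path_image (linepath a b) \<subseteq> g ` {0..1}"
    using seg by (rule image_mono)
  then show "path_image (restr_path a b g) \<subseteq> path_image g"
    unfolding restr_path_eq_comp_linepath path_image_compose by (simp only: path_image_def[of g])
qed

lemma restr_path_restr_path:
  "restr_path p q (restr_path a b g) = restr_path ((b - a) * p + a) ((b - a) * q + a) g"
  by (simp add: restr_path_def algebra_simps)

lemma homotopy_cut_setI:
  assumes "closed A" "A \<subseteq> {0..1}" "interior A = {}" "0 \<in> A" "1 \<in> A" "\<And>x. x \<in> A \<Longrightarrow> \<alpha> x = \<beta> x"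
    and "\<And>p q. is_gap A p q \<Longrightarrow> homotopic_paths S (restr_path p q \<alpha>) (restr_path p q \<beta>)"
  shows "homotopy_cut_set S \<alpha> \<beta> A"
  unfolding homotopy_cut_set_def
proof (intro conjI ballI)
  fix g assume "g \<in> gap_intervals A"
  moreover obtain p q where "g = (p, q)"
    by fastforce
  ultimately have "is_gap A p q"
    using gap_intervals_iff_is_gap[of A 0 1] assms(1,2,4,5) by blast
  then show "case g of (p, q) \<Rightarrow> homotopic_paths S (restr_path p q \<alpha>) (restr_path p q \<beta>)"
    using assms(7) \<open>g = (p, q)\<close> by simp
qed (use assms in \<open>simp_all add: closure_closed\<close>)

lemma homotopy_cut_setD:
  assumes "homotopy_cut_set S \<alpha> \<beta> A"
  shows "closed A" "A \<subseteq> {0..1}" "interior A = {}" "0 \<in> A" "1 \<in> A" "\<And>x. x \<in> A \<Longrightarrow> \<alpha> x = \<beta> x"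
    and "\<And>p q. is_gap A p q \<Longrightarrow> homotopic_paths S (restr_path p q \<alpha>) (restr_path p q \<beta>)"
proof -
  show cut: "closed A" "A \<subseteq> {0..1}" "0 \<in> A" "1 \<in> A" "\<And>x. x \<in> A \<Longrightarrow> \<alpha> x = \<beta> x"
    using assms by (simp_all add: homotopy_cut_set_def)
  then show "interior A = {}"
    using assms by (simp add: homotopy_cut_set_def closure_closed)
  fix p q assume "is_gap A p q"
  then have "(p, q) \<in> gap_intervals A"
    using gap_intervals_iff_is_gap[of A 0 1] cut by blast
  then show "homotopic_paths S (restr_path p q \<alpha>) (restr_path p q \<beta>)"
    using assms by (auto simp: homotopy_cut_set_def)
qed

lemma is_gap_affine_vimage:
  fixes c :: real
  assumes "0 < c" "is_gap ((\<lambda>y. c * y + a) -` C) p q"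
  shows "is_gap C (c * p + a) (c * q + a)"
  unfolding is_gap_def
proof (intro conjI)
  show "c * p + a < c * q + a" "c * p + a \<in> C" "c * q + a \<in> C"
    using assms by (auto simp: is_gap_def)
  show "{c * p + a<..<c * q + a} \<inter> C = {}"
  proof (rule ccontr)
    assume "{c * p + a<..<c * q + a} \<inter> C \<noteq> {}"
    then obtain x where x: "c * p + a < x" "x < c * q + a" "x \<in> C"
      by auto
    have "c * ((x - a) / c) + a = x"
      using \<open>0 < c\<close> by simp
    moreover have "p < (x - a) / c" "(x - a) / c < q"
      using x \<open>0 < c\<close> by (simp_all add: field_simps)
    ultimately have "(x - a) / c \<in> {p<..<q} \<inter> ((\<lambda>y. c * y + a) -` C)"
      using x by simp
    then show False
      using assms(2) unfolding is_gap_def by (metis empty_iff)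
  qed
qed

lemma countable_affine_vimage:
  fixes c :: real
  assumes "c \<noteq> 0" "countable C"
  shows "countable ((\<lambda>y. c * y + a) -` C)"
proof -
  have "(\<lambda>y. c * y + a) -` C \<subseteq> (\<lambda>x. (x - a) / c) ` C"
  proof
    fix y assume "y \<in> (\<lambda>y. c * y + a) -` C"
    moreover have "y = (c * y + a - a) / c"
      using assms(1) by simp
    ultimately show "y \<in> (\<lambda>x. (x - a) / c) ` C"
      by (intro rev_image_eqI[of "c * y + a"]) simp_all
  qed
  then show ?thesis
    using countable_image[OF assms(2)] by (rule countable_subset)
qed

lemma affine_vimage_unit_interval:
  fixes a b :: real
  assumes "a < b"
  shows "(\<lambda>y. (b - a) * y + a) -` {a..b} = {0..1}"
proof -
  have "a \<le> (b - a) * y + a \<longleftrightarrow> 0 \<le> (b - a) * y" for y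
    by simp
  moreover have "(b - a) * y + a \<le> b \<longleftrightarrow> (b - a) * y \<le> (b - a) * 1" for y
    by (simp add: le_diff_eq)
  ultimately show ?thesis
    using assms by (auto simp: zero_le_mult_iff mult_le_cancel_left_pos)
qed

lemma homotopic_paths_if_scattered_cut_set:
  assumes "well_defined_scattered_products S"
    and "path \<alpha>" "path_image \<alpha> \<subseteq> S" "path \<beta>" "path_image \<beta> \<subseteq> S"
    and "scattered_set A" "homotopy_cut_set S \<alpha> \<beta> A"
  shows "homotopic_paths S \<alpha> \<beta>"
  using assms unfolding well_defined_scattered_products_def by blast

lemma homotopic_restr_paths_if_countable_cut:
  fixes \<alpha> \<beta> :: "real \<Rightarrow> 'a::topological_space"
  assumes wd: "well_defined_scattered_products S"
    and paths: "path \<alpha>" "path_image \<alpha> \<subseteq> S" "path \<beta>" "path_image \<beta> \<subseteq> S"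
    and ab: "0 \<le> a" "a < b" "b \<le> 1"
    and C: "closed C" "countable C" "C \<subseteq> {a..b}" "a \<in> C" "b \<in> C" "\<And>x. x \<in> C \<Longrightarrow> \<alpha> x = \<beta> x"
    and gaps: "\<And>p q. is_gap C p q \<Longrightarrow> homotopic_paths S (restr_path p q \<alpha>) (restr_path p q \<beta>)"
  shows "homotopic_paths S (restr_path a b \<alpha>) (restr_path a b \<beta>)"
proof -
  define f where "f = (\<lambda>y. (b - a) * y + a)"
  define D where "D = f -` C"
  have "0 < b - a"
    using ab by simp
  have "closed D"
    unfolding D_def f_def by (intro continuous_closed_vimage C(1) continuous_intros)
  have "countable D"
    using countable_affine_vimage[OF _ C(2)] \<open>0 < b - a\<close> by (simp add: D_def f_def)
  have "D \<subseteq> {0..1}"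
    using vimage_mono[OF C(3), of f] affine_vimage_unit_interval[OF ab(2)] by (simp add: D_def f_def)
  have "0 \<in> D" "1 \<in> D"
    using C(4,5) by (simp_all add: D_def f_def)
  have cut: "homotopy_cut_set S (restr_path a b \<alpha>) (restr_path a b \<beta>) D"
  proof (rule homotopy_cut_setI)
    show "interior D = {}"
      by (rule interior_eq_empty_if_countable[OF \<open>countable D\<close>])
    show "restr_path a b \<alpha> x = restr_path a b \<beta> x" if "x \<in> D" for x
      using C(6) that by (simp add: D_def f_def restr_path_def)
    show "homotopic_paths S (restr_path p q (restr_path a b \<alpha>)) (restr_path p q (restr_path a b \<beta>))"
      if "is_gap D p q" for p q
      using gaps is_gap_affine_vimage[OF \<open>0 < b - a\<close>, of a C p q] that
      unfolding D_def f_def by (simp add: restr_path_restr_path)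
  qed fact+
  have restr: "path (restr_path a b g)" "path_image (restr_path a b g) \<subseteq> S"
    if "path g" "path_image g \<subseteq> S" for g
  proof -
    have ab01: "a \<in> {0..1}" "b \<in> {0..1}"
      using ab by simp_all
    show "path (restr_path a b g)"
      using path_restr_path(1)[OF that(1) ab01] .
    show "path_image (restr_path a b g) \<subseteq> S"
      using path_restr_path(2)[OF that(1) ab01] that(2) by (rule order_trans)
  qed
  show ?thesis
    by (rule homotopic_paths_if_scattered_cut_set[OF wd restr[OF paths(1,2)] restr[OF paths(3,4)]
          scattered_if_countable_closed[OF \<open>closed D\<close> \<open>countable D\<close>] cut])
qed

section \<open>Transfinite sequences of reals\<close>

text \<open>\<open>covers j i\<close> encodes \<open>j = i + 1\<close>, and \<open>limit_elem\<close> the limit stages of the family.\<close>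

definition covers :: "'a::order \<Rightarrow> 'a \<Rightarrow> bool" where
  "covers j i \<longleftrightarrow> i < j \<and> \<not> (\<exists>k. i < k \<and> k < j)"

definition limit_elem :: "'a::order \<Rightarrow> bool" where
  "limit_elem j \<longleftrightarrow> (\<exists>m. m < j) \<and> (\<forall>m<j. \<exists>k. m < k \<and> k < j)"

lemma covers_le: "covers j i \<Longrightarrow> i < k \<Longrightarrow> j \<le> (k::'a::linorder)"
  unfolding covers_def by (meson not_le)

lemma not_covers_imp_limit_elem:
  "m < j \<Longrightarrow> (\<And>i. \<not> covers j i) \<Longrightarrow> limit_elem j"
  unfolding covers_def limit_elem_def by blast

lemma antitone_if_covers_limit:
  fixes A :: "'i::wellorder \<Rightarrow> 'x set"
  assumes covers: "\<And>i j. covers j i \<Longrightarrow> A j \<subseteq> A i"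
    and limit: "\<And>j. limit_elem j \<Longrightarrow> A j = (\<Inter>m\<in>{..<j}. A m)"
  shows "i \<le> j \<Longrightarrow> A j \<subseteq> A i"
proof (induction j rule: less_induct)
  case (less j)
  show ?case
  proof (cases "i = j")
    case False
    with less.prems have "i < j"
      by simp
    show ?thesis
    proof (cases "\<exists>k. covers j k")
      case True
      then obtain k where k: "covers j k" ..
      then have "i \<le> k" "k < j"
        using \<open>i < j\<close> covers_le[OF k, of i] by (auto simp: covers_def not_less)
      then show ?thesis
        using less.IH covers[OF k] by blast
    next
      case False
      then have "A j = (\<Inter>m\<in>{..<j}. A m)"
        using limit not_covers_imp_limit_elem[OF \<open>i < j\<close>] by blast
      then show ?thesis
        using \<open>i < j\<close> by blast
    qed
  qed simp
qed

locale continuous_descent =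
  fixes l :: "'i::wellorder \<Rightarrow> real" and a :: real
  assumes antitone: "i \<le> j \<Longrightarrow> l j \<le> l i"
    and lower_bound: "a \<le> l i"
    and approaches: "a < x \<Longrightarrow> \<exists>i. l i < x"
    and limit: "limit_elem j \<Longrightarrow> (\<And>m. m < j \<Longrightarrow> x \<le> l m) \<Longrightarrow> x \<le> l j"
begin

lemma no_value_between_cover:
  assumes "covers k m"
  shows "{l k<..<l m} \<inter> insert a (range l) = {}"
proof -
  have "l i \<notin> {l k<..<l m}" for i
  proof (cases "i \<le> m")
    case True
    then show ?thesis
      using antitone[of i m] by simp
  next
    case False
    then have "k \<le> i"
      using covers_le[OF assms] by simp
    then show ?thesis
      using antitone[of k i] by simp
  qed
  moreover have "a \<notin> {l k<..<l m}"
    using lower_bound[of k] by simp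
  ultimately show ?thesis
    by blast
qed

lemma first_value_below:
  assumes "a < x"
  obtains k where "l k < x" "\<And>m. m < k \<Longrightarrow> x \<le> l m" "(\<forall>m. \<not> m < k) \<or> (\<exists>m. covers k m)"
proof -
  define k where "k = (LEAST i. l i < x)"
  have "l k < x"
    unfolding k_def using approaches[OF assms] by (rule LeastI_ex)
  moreover have below: "x \<le> l m" if "m < k" for m
    using not_less_Least[OF that[unfolded k_def]] by simp
  moreover have "(\<forall>m. \<not> m < k) \<or> (\<exists>m. covers k m)"
  proof (rule ccontr)
    assume "\<not> ?thesis"
    then have "limit_elem k"
      using not_covers_imp_limit_elem by blast
    then have "x \<le> l k"
      using limit below by blast
    with \<open>l k < x\<close> show False
      by simp
  qed
  ultimately show thesis
    using that by blast
qed

lemma closed_values: "closed (insert a (range l))"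
proof -
  have "x \<in> insert a (range l)" if x: "x \<in> closure (insert a (range l))" for x
  proof (rule ccontr)
    assume x_notin: "x \<notin> insert a (range l)"
    have "insert a (range l) \<subseteq> {a..}"
      using lower_bound by auto
    then have "a \<le> x"
      using closure_minimal[OF _ closed_atLeast] x by blast
    with x_notin have "a < x"
      by auto
    then obtain k where k: "l k < x" "\<And>m. m < k \<Longrightarrow> x \<le> l m" "(\<forall>m. \<not> m < k) \<or> (\<exists>m. covers k m)"
      by (rule first_value_below) auto
    have "\<exists>U. open U \<and> x \<in> U \<and> U \<inter> insert a (range l) = {}"
      using k(3)
    proof
      assume "\<forall>m. \<not> m < k"
      then have "l i \<le> l k" for i
        using antitone not_less by blast
      then have "insert a (range l) \<subseteq> {..l k}"
        using lower_bound[of k] by auto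
      then show ?thesis
        using k(1) by (intro exI[of _ "{l k<..}"]) auto
    next
      assume "\<exists>m. covers k m"
      then obtain m where m: "covers k m" ..
      then have "x < l m"
        using k(2) x_notin by (force simp: covers_def order_le_less)
      then show ?thesis
        using k(1) no_value_between_cover[OF m] by (intro exI[of _ "{l k<..<l m}"]) auto
    qed
    then show False
      using x open_Int_closure_eq_empty by blast
  qed
  then show ?thesis
    using closure_subset_eq by blast
qed

lemma gap_of_values:
  assumes "is_gap (insert a (range l)) p q"
  obtains k m where "covers k m" "p = l k" "q = l m"
proof -
  have gap: "p < q" "p \<in> insert a (range l)" "q \<in> insert a (range l)"
    "{p<..<q} \<inter> insert a (range l) = {}"
    using assms by (simp_all add: is_gap_def)
  moreover have "a \<le> p"
    using gap(2) lower_bound by auto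
  ultimately have "a < q"
    by linarith
  then obtain k where k: "l k < q" "\<And>m. m < k \<Longrightarrow> q \<le> l m" "(\<forall>m. \<not> m < k) \<or> (\<exists>m. covers k m)"
    by (rule first_value_below) auto
  obtain iq where iq: "q = l iq"
    using gap(3) \<open>a < q\<close> by auto
  have "iq < k"
    using antitone[of k iq] k(1) iq by (meson not_le)
  then obtain m where m: "covers k m"
    using k(3) by blast
  have "iq \<le> m"
    using covers_le[OF m] \<open>iq < k\<close> by (meson not_le)
  then have "q = l m"
    using antitone[of iq m] k(2) m iq by (force simp: covers_def)
  moreover have "p = l k"
  proof -
    have "l k \<notin> {p<..<q}"
      using gap(4) by blast
    moreover have "p \<notin> {l k<..<l m}"
      using no_value_between_cover[OF m] gap(2) by blast
    ultimately show ?thesis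
      using k(1) gap(1) \<open>q = l m\<close> by auto
  qed
  ultimately show thesis
    using that m by blast
qed

end

section \<open>Gaps of a nested family containing a fixed point\<close>

lemma Sup_Int_atMost:
  fixes A :: "real set"
  assumes "closed A" "x \<in> A" "x \<le> t"
  shows "Sup (A \<inter> {..t}) \<in> A" "Sup (A \<inter> {..t}) \<le> t" "x \<le> Sup (A \<inter> {..t})"
proof -
  have ne: "A \<inter> {..t} \<noteq> {}" and bdd: "bdd_above (A \<inter> {..t})"
    using assms(2,3) by auto
  have "Sup (A \<inter> {..t}) \<in> A \<inter> {..t}"
    using closed_contains_Sup[OF ne bdd] assms(1) by (simp add: closed_Int)
  then show "Sup (A \<inter> {..t}) \<in> A" "Sup (A \<inter> {..t}) \<le> t"
    by simp_all
  show "x \<le> Sup (A \<inter> {..t})"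
    using assms(2,3) bdd by (intro cSup_upper) simp_all
qed

lemma Inf_image_mem_closed:
  fixes f :: "'i \<Rightarrow> real"
  assumes "closed B" "n0 \<in> I" "bdd_below (f ` I)"
    and dominated: "\<And>n. n \<in> I \<Longrightarrow> \<exists>n'\<in>I. f n' \<le> f n \<and> f n' \<in> B"
  shows "Inf (f ` I) \<in> B"
proof -
  have "Inf (f ` I) \<in> closure B"
    unfolding closure_approachable
  proof (intro allI impI)
    fix e :: real assume "e > 0"
    moreover have "f ` I \<noteq> {}"
      using assms(2) by blast
    ultimately have "\<exists>y\<in>f ` I. y < Inf (f ` I) + e"
      using cInf_less_iff[OF _ assms(3), of "Inf (f ` I) + e"] by simp
    then obtain n where n: "n \<in> I" "f n < Inf (f ` I) + e"
      by blast
    then obtain n' where n': "n' \<in> I" "f n' \<le> f n" "f n' \<in> B"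
      using dominated by blast
    moreover have "Inf (f ` I) \<le> f n'"
      using n'(1) assms(3) by (simp add: cInf_lower)
    ultimately show "\<exists>y\<in>B. dist y (Inf (f ` I)) < e"
      using n(2) by (intro bexI[of _ "f n'"]) (auto simp: dist_real_def)
  qed
  then show ?thesis
    using assms(1) by (simp add: closure_closed)
qed


text \<open>The base point \<open>a\<close> keeps \<open>A i \<inter> {..t}\<close> nonempty, so that \<open>left_end i\<close> is a genuine
  supremum; for \<open>t \<notin> A i\<close> it is the left end of the gap of \<open>A i\<close> containing \<open>t\<close>.\<close>

locale nested_closed_sets =
  fixes A :: "'i::wellorder \<Rightarrow> real set" and a t :: real
  assumes closed: "closed (A i)"
    and antitone: "i \<le> j \<Longrightarrow> A j \<subseteq> A i"
    and limit: "limit_elem j \<Longrightarrow> A j = (\<Inter>m\<in>{..<j}. A m)"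
    and base_point: "a \<in> A i" "a \<le> t"
begin

definition left_end :: "'i \<Rightarrow> real" where
  "left_end i = Sup (A i \<inter> {..t})"

lemma left_end_mem: "left_end i \<in> A i" "left_end i \<le> t"
  using Sup_Int_atMost(1,2)[OF closed base_point] by (simp_all add: left_end_def)

lemma le_left_end: "x \<in> A i \<Longrightarrow> x \<le> t \<Longrightarrow> x \<le> left_end i"
  using Sup_Int_atMost(3)[OF closed] by (simp add: left_end_def)

lemma left_end_antitone: "i \<le> j \<Longrightarrow> left_end j \<le> left_end i"
  using le_left_end left_end_mem antitone by blast

lemma bdd_below_left_end: "bdd_below (left_end ` I)"
  using le_left_end base_point by (intro bdd_belowI2) blast

lemma Inf_left_end_mem:
  assumes "m \<in> I" "\<And>n. n \<in> I \<Longrightarrow> max m n \<in> I"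
  shows "Inf (left_end ` I) \<in> A m"
proof (rule Inf_image_mem_closed[OF closed \<open>m \<in> I\<close> bdd_below_left_end])
  fix n assume "n \<in> I"
  have "left_end (max m n) \<le> left_end n" "left_end (max m n) \<in> A m"
    using left_end_antitone[of n "max m n"] left_end_mem[of "max m n"] antitone[of m "max m n"]
    by auto
  then show "\<exists>n'\<in>I. left_end n' \<le> left_end n \<and> left_end n' \<in> A m"
    using assms(2)[OF \<open>n \<in> I\<close>] by blast
qed

lemma left_end_limit:
  assumes j: "limit_elem j" and below: "\<And>m. m < j \<Longrightarrow> x \<le> left_end m"
  shows "x \<le> left_end j"
proof -
  obtain m0 where "m0 < j"
    using j by (auto simp: limit_elem_def)
  let ?y = "Inf (left_end ` {..<j})"
  have "?y \<in> A m" if "m < j" for m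
    using Inf_left_end_mem[of m "{..<j}"] that by (simp add: max_def)
  then have "?y \<in> A j"
    using limit[OF j] by auto
  moreover have "?y \<le> t"
    using cInf_lower[OF _ bdd_below_left_end, of "left_end m0" "{..<j}"] left_end_mem(2)[of m0] \<open>m0 < j\<close>
    by simp
  ultimately have "?y \<le> left_end j"
    by (rule le_left_end)
  moreover have "x \<le> ?y"
    using below \<open>m0 < j\<close> by (auto intro: cInf_greatest)
  ultimately show ?thesis
    by linarith
qed

lemma left_end_continuous_descent:
  assumes no_common: "{a<..t} \<inter> (\<Inter>i. A i) = {}"
  shows "continuous_descent left_end a"
proof
  show "a \<le> left_end i" for i
    using le_left_end base_point by blast
  show "\<exists>i. left_end i < x" if "a < x" for x
  proof (rule ccontr)
    assume "\<nexists>i. left_end i < x"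
    then have "x \<le> Inf (range left_end)"
      by (auto intro: cInf_greatest simp: not_less)
    moreover have "Inf (range left_end) \<in> A m" for m
      using Inf_left_end_mem[of m UNIV] by simp
    moreover have "Inf (range left_end) \<le> t"
      using cInf_lower[OF _ bdd_below_left_end, of "left_end undefined" UNIV] left_end_mem(2)
      by (meson order_trans rangeI)
    ultimately have "Inf (range left_end) \<in> {a<..t} \<inter> (\<Inter>i. A i)"
      using \<open>a < x\<close> by simp
    then show False
      using no_common by blast
  qed
qed (simp_all add: left_end_antitone left_end_limit)

end

locale nested_cut_sets =
  fixes A :: "'i::wellorder \<Rightarrow> real set" and a b t :: real
  assumes closed: "\<And>i. closed (A i)"
    and antitone: "\<And>i j. i \<le> j \<Longrightarrow> A j \<subseteq> A i"
    and limit: "\<And>j. limit_elem j \<Longrightarrow> A j = (\<Inter>m\<in>{..<j}. A m)"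
    and gap: "is_gap (\<Inter>i. A i) a b"
    and t: "a < t" "t < b" "\<And>i. t \<notin> A i"
begin

lemma ends_mem: "a \<in> A i" "b \<in> A i"
proof -
  have "a \<in> (\<Inter>i. A i)" "b \<in> (\<Inter>i. A i)"
    using gap unfolding is_gap_def by simp_all
  then show "a \<in> A i" "b \<in> A i"
    by simp_all
qed

lemma no_common_point: "x \<in> (\<Inter>i. A i) \<Longrightarrow> a < x \<Longrightarrow> x < b \<Longrightarrow> False"
  using gap unfolding is_gap_def by (metis IntI empty_iff greaterThanLessThan_iff)

text \<open>Right ends are left ends of the reflected sets \<open>- A i\<close>, so everything proved about left
  ends applies to both sides.\<close>

sublocale left: nested_closed_sets A a t
  using closed antitone limit ends_mem t by unfold_locales auto

sublocale right: nested_closed_sets "\<lambda>i. uminus -` A i" "- b" "- t"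
proof
  show "closed (uminus -` A i)" for i
    using closed by (rule continuous_closed_vimage) (intro continuous_intros)
  show "uminus -` A j \<subseteq> uminus -` A i" if "i \<le> j" for i j
    using antitone[OF that] by auto
  show "uminus -` A j = (\<Inter>m\<in>{..<j}. uminus -` A m)" if "limit_elem j" for j
    using limit[OF that] by (simp add: vimage_INT)
  show "- b \<in> uminus -` A i" "- b \<le> - t" for i
    using ends_mem t by simp_all
qed

abbreviation l :: "'i \<Rightarrow> real" where
  "l \<equiv> left.left_end"

definition r :: "'i \<Rightarrow> real" where
  "r i = - right.left_end i"

lemma l_props: "l i \<in> A i" "l i < t" "x \<in> A i \<Longrightarrow> x \<le> t \<Longrightarrow> x \<le> l i"
  using left.left_end_mem[of i] left.le_left_end t(3)[of i] by (auto simp: order_le_less)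

lemma r_props: "r i \<in> A i" "t < r i" "x \<in> A i \<Longrightarrow> t \<le> x \<Longrightarrow> r i \<le> x"
  using right.left_end_mem[of i] right.le_left_end[of "- x" i] t(3)[of i]
  by (auto simp: r_def order_le_less minus_le_iff)

lemma is_gap_l_r: "is_gap (A i) (l i) (r i)"
proof -
  have "x \<notin> A i" if "l i < x" "x < r i" for x
    using that l_props(3)[of x i] r_props(3)[of x i] by (meson le_cases not_le)
  then show ?thesis
    using l_props(1,2) r_props(1,2) less_trans[OF l_props(2) r_props(2)] by (auto simp: is_gap_def)
qed

lemma descent_l: "continuous_descent l a"
  using no_common_point t by (intro left.left_end_continuous_descent) force

lemma descent_neg_r: "continuous_descent (\<lambda>i. - r i) (- b)"
proof -
  have "continuous_descent right.left_end (- b)"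
    using no_common_point[of "- x" for x] t by (intro right.left_end_continuous_descent) force
  then show ?thesis
    by (simp add: r_def)
qed

lemma l_antitone: "i \<le> j \<Longrightarrow> l j \<le> l i"
  by (rule continuous_descent.antitone[OF descent_l])

lemma r_mono: "i \<le> j \<Longrightarrow> r i \<le> r j"
  using continuous_descent.antitone[OF descent_neg_r] by simp

definition ends :: "real set" where
  "ends = insert a (range l) \<union> insert b (range r)"

lemma right_ends_eq: "insert b (range r) = uminus ` insert (- b) (range (\<lambda>i. - r i))"
  by (simp add: image_image)

lemma closed_ends: "closed ends"
  unfolding ends_def right_ends_eq
  by (intro closed_Un closed_negations continuous_descent.closed_values descent_l descent_neg_r)

lemma ends_bounds: "a \<le> l i" "r i \<le> b" "l i \<le> b" "a \<le> r i"
proof -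
  show "a \<le> l i" "r i \<le> b"
    using l_props(3)[OF ends_mem(1)] r_props(3)[OF ends_mem(2)] t by simp_all
  show "l i \<le> b" "a \<le> r i"
    using l_props(2)[of i] r_props(2)[of i] t by simp_all
qed

lemma ends_subset: "ends \<subseteq> {a..b}"
  using ends_bounds t by (auto simp: ends_def)

lemma countable_ends: "countable (UNIV :: 'i set) \<Longrightarrow> countable ends"
  by (simp add: ends_def)

lemma ends_subset_Union: "ends \<subseteq> (\<Union>i. A i)"
  using ends_mem[of undefined] l_props(1) r_props(1) by (auto simp: ends_def)

lemma gap_of_ends:
  assumes "is_gap ends p q"
  shows "(\<exists>k m. covers k m \<and> p = l k \<and> q = l m) \<or> (\<exists>k m. covers k m \<and> p = r m \<and> q = r k) \<or>
    (\<exists>i. p = l i \<and> q = r i)"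
proof -
  define i0 :: 'i where "i0 = (LEAST i. True)"
  have "i0 \<le> i" for i
    by (simp add: i0_def Least_le)
  then have "l i \<le> l i0" "r i0 \<le> r i" for i
    by (simp_all add: l_antitone r_mono)
  then have "insert a (range l) \<subseteq> {..l i0}" "insert b (range r) \<subseteq> {r i0..}"
    using ends_bounds[of i0] by auto
  moreover have "l i0 < r i0"
    using l_props(2) r_props(2) by (rule less_trans)
  ultimately consider "is_gap (insert a (range l)) p q" | "is_gap (insert b (range r)) p q"
    | "p = l i0 \<and> q = r i0"
    using is_gap_Un_cases[OF assms[unfolded ends_def]] by blast
  then show ?thesis
  proof cases
    case 1
    then obtain k m where "covers k m" "p = l k" "q = l m"
      by (rule continuous_descent.gap_of_values[OF descent_l])
    then show ?thesis
      by blast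
  next
    case 2
    then have "is_gap (uminus ` insert (- b) (range (\<lambda>i. - r i))) p q"
      by (simp only: right_ends_eq)
    then have "is_gap (insert (- b) (range (\<lambda>i. - r i))) (- q) (- p)"
      by (simp only: is_gap_uminus)
    then obtain k m where "covers k m" "- q = - r k" "- p = - r m"
      by (rule continuous_descent.gap_of_values[OF descent_neg_r])
    then show ?thesis
      by auto
  qed blast
qed

lemma homotopic_on_gap_of_ends:
  assumes cut: "\<And>i. homotopy_cut_set S \<alpha> \<beta> (A i)"
    and gaps: "\<And>i j a b c d. covers j i \<Longrightarrow> is_gap (A j) c d \<Longrightarrow> is_gap (A i) a b \<Longrightarrow>
                  c \<le> a \<Longrightarrow> b \<le> d \<Longrightarrow>
                  (c < a \<longrightarrow> homotopic_paths S (restr_path c a \<alpha>) (restr_path c a \<beta>)) \<and>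
                  (b < d \<longrightarrow> homotopic_paths S (restr_path b d \<alpha>) (restr_path b d \<beta>))"
    and pq: "is_gap ends p q"
  shows "homotopic_paths S (restr_path p q \<alpha>) (restr_path p q \<beta>)"
proof -
  have "p < q"
    using pq by (simp add: is_gap_def)
  have covers_imp_le: "m \<le> k" if "covers k m" for k m
    using that unfolding covers_def by (simp add: less_imp_le)
  from gap_of_ends[OF pq] consider
      (left) k m where "covers k m" "p = l k" "q = l m"
    | (right) k m where "covers k m" "p = r m" "q = r k"
    | (middle) i where "p = l i" "q = r i"
    by blast
  then show ?thesis
  proof cases
    case left
    then show ?thesis
      using gaps[OF left(1) is_gap_l_r is_gap_l_r] \<open>p < q\<close> covers_imp_le[OF left(1)]
      by (simp add: l_antitone r_mono)
  next
    case right
    then show ?thesis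
      using gaps[OF right(1) is_gap_l_r is_gap_l_r] \<open>p < q\<close> covers_imp_le[OF right(1)]
      by (simp add: l_antitone r_mono)
  next
    case middle
    then show ?thesis
      using homotopy_cut_setD(7)[OF cut is_gap_l_r] by simp
  qed
qed

end

section \<open>Intersections of nested cut-sets\<close>

lemma homotopic_restr_paths_on_gap_of_Inter:
  fixes S :: "'a::topological_space set"
    and \<alpha> \<beta> :: "real \<Rightarrow> 'a"
    and A :: "'i::wellorder \<Rightarrow> real set"
  assumes wd: "well_defined_scattered_products S"
    and paths: "path \<alpha>" "path_image \<alpha> \<subseteq> S" "path \<beta>" "path_image \<beta> \<subseteq> S"
    and countable_index: "countable (UNIV :: 'i set)"
    and cut: "\<And>i. homotopy_cut_set S \<alpha> \<beta> (A i)"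
    and antitone: "\<And>i j. i \<le> j \<Longrightarrow> A j \<subseteq> A i"
    and limit: "\<And>j. limit_elem j \<Longrightarrow> A j = (\<Inter>m\<in>{..<j}. A m)"
    and gaps: "\<And>i j a b c d. covers j i \<Longrightarrow> is_gap (A j) c d \<Longrightarrow> is_gap (A i) a b \<Longrightarrow>
                  c \<le> a \<Longrightarrow> b \<le> d \<Longrightarrow>
                  (c < a \<longrightarrow> homotopic_paths S (restr_path c a \<alpha>) (restr_path c a \<beta>)) \<and>
                  (b < d \<longrightarrow> homotopic_paths S (restr_path b d \<alpha>) (restr_path b d \<beta>))"
    and gap: "is_gap (\<Inter>i. A i) a b"
  shows "homotopic_paths S (restr_path a b \<alpha>) (restr_path a b \<beta>)"
proof -
  define i0 :: 'i where "i0 = (LEAST i. True)"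
  have "i0 \<le> i" for i
    by (simp add: i0_def Least_le)
  have "\<not> {a<..<b} \<subseteq> A i0"
  proof
    assume "{a<..<b} \<subseteq> A i0"
    then have "{a<..<b} \<subseteq> interior (A i0)"
      by (simp add: interior_maximal)
    then show False
      using homotopy_cut_setD(3)[OF cut] gap by (simp add: is_gap_def)
  qed
  then obtain t where t: "a < t" "t < b" "t \<notin> A i0"
    unfolding subset_iff greaterThanLessThan_iff by blast
  then have "t \<notin> A i" for i
    using antitone[OF \<open>i0 \<le> i\<close>] by blast
  then interpret nested_cut_sets A a b t
    using homotopy_cut_setD(1)[OF cut] antitone limit gap t by unfold_locales auto
  have "a \<in> {0..1}" "b \<in> {0..1}"
    using homotopy_cut_setD(2)[OF cut, of i0] ends_mem[of i0] by blast+
  then show ?thesis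
  proof (intro homotopic_restr_paths_if_countable_cut[OF wd paths _ _ _ closed_ends
        countable_ends[OF countable_index] ends_subset])
    show "a < b" "a \<in> ends" "b \<in> ends"
      using t by (simp_all add: ends_def)
    show "\<alpha> x = \<beta> x" if "x \<in> ends" for x
      using that ends_subset_Union homotopy_cut_setD(6)[OF cut] by blast
    show "homotopic_paths S (restr_path p q \<alpha>) (restr_path p q \<beta>)" if "is_gap ends p q" for p q
      using homotopic_on_gap_of_ends[OF cut gaps that] .
  qed simp_all
qed

lemma homotopy_cut_set_Inter:
  fixes S :: "'a::topological_space set"
    and \<alpha> \<beta> :: "real \<Rightarrow> 'a"
    and A :: "'i::wellorder \<Rightarrow> real set"
  assumes wd: "well_defined_scattered_products S"
    and paths: "path \<alpha>" "path_image \<alpha> \<subseteq> S" "path \<beta>" "path_image \<beta> \<subseteq> S"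
    and countable_index: "countable (UNIV :: 'i set)"
    and cut: "\<And>i. homotopy_cut_set S \<alpha> \<beta> (A i)"
    and antitone: "\<And>i j. i \<le> j \<Longrightarrow> A j \<subseteq> A i"
    and limit: "\<And>j. limit_elem j \<Longrightarrow> A j = (\<Inter>m\<in>{..<j}. A m)"
    and gaps: "\<And>i j a b c d. covers j i \<Longrightarrow> is_gap (A j) c d \<Longrightarrow> is_gap (A i) a b \<Longrightarrow>
                  c \<le> a \<Longrightarrow> b \<le> d \<Longrightarrow>
                  (c < a \<longrightarrow> homotopic_paths S (restr_path c a \<alpha>) (restr_path c a \<beta>)) \<and>
                  (b < d \<longrightarrow> homotopic_paths S (restr_path b d \<alpha>) (restr_path b d \<beta>))"
  shows "homotopy_cut_set S \<alpha> \<beta> (\<Inter>i. A i)"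
proof (rule homotopy_cut_setI)
  note cut_sets = homotopy_cut_setD[OF cut]
  show "closed (\<Inter>i. A i)"
    using cut_sets(1) by (simp add: closed_INT)
  show "(\<Inter>i. A i) \<subseteq> {0..1}"
    using cut_sets(2)[of undefined] by blast
  show "0 \<in> (\<Inter>i. A i)" "1 \<in> (\<Inter>i. A i)" "\<And>x. x \<in> (\<Inter>i. A i) \<Longrightarrow> \<alpha> x = \<beta> x"
    using cut_sets(4,5,6) by auto
  have "interior (\<Inter>i. A i) \<subseteq> interior (A undefined)"
    by (rule interior_mono) blast
  then show "interior (\<Inter>i. A i) = {}"
    using cut_sets(3) by simp
  show "homotopic_paths S (restr_path p q \<alpha>) (restr_path p q \<beta>)" if "is_gap (\<Inter>i. A i) p q" for p q
    using homotopic_restr_paths_on_gap_of_Inter[OF wd paths countable_index cut antitone limit gaps that] .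
qed

theorem mainTheorem17:
  fixes S :: "'a::topological_space set"
    and \<alpha> \<beta> :: "real \<Rightarrow> 'a"
    and A :: "'i::wellorder \<Rightarrow> real set"
  assumes wd: "well_defined_scattered_products S"
    and paths: "path \<alpha>" "path_image \<alpha> \<subseteq> S" "path \<beta>" "path_image \<beta> \<subseteq> S"
    and countable_index: "countable (UNIV :: 'i set)"
    and limit_index: "\<forall>i::'i. \<exists>j. i < j"
    and cut: "\<forall>i. homotopy_cut_set S \<alpha> \<beta> (A i)"
    and succ_sub: "\<forall>i j. i < j \<and> \<not> (\<exists>k. i < k \<and> k < j) \<longrightarrow> A j \<subseteq> A i"
    and lim_int: "\<forall>l. (\<exists>m. m < l) \<and> (\<forall>m<l. \<exists>k. m < k \<and> k < l) \<longrightarrow> A l = (\<Inter>m\<in>{m. m < l}. A m)"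
    and gaps: "\<forall>i j a b c d. i < j \<and> \<not> (\<exists>k. i < k \<and> k < j) \<and>
                  (c, d) \<in> gap_intervals (A j) \<and> (a, b) \<in> gap_intervals (A i) \<and>
                  {a<..<b} \<subseteq> {c<..<d} \<longrightarrow>
                  (c < a \<longrightarrow> homotopic_paths S (restr_path c a \<alpha>) (restr_path c a \<beta>)) \<and>
                  (b < d \<longrightarrow> homotopic_paths S (restr_path b d \<alpha>) (restr_path b d \<beta>))"
  shows "homotopy_cut_set S \<alpha> \<beta> (\<Inter>i. A i)"
proof -
  note cut_sets = homotopy_cut_setD[OF cut[rule_format]]
  have limit: "A j = (\<Inter>m\<in>{..<j}. A m)" if "limit_elem j" for j
    using lim_int that by (simp add: limit_elem_def lessThan_def)
  have antitone: "A j \<subseteq> A i" if "i \<le> j" for i j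
    using antitone_if_covers_limit[OF _ limit] succ_sub that by (auto simp: covers_def)
  have "(c < a \<longrightarrow> homotopic_paths S (restr_path c a \<alpha>) (restr_path c a \<beta>)) \<and>
      (b < d \<longrightarrow> homotopic_paths S (restr_path b d \<alpha>) (restr_path b d \<beta>))"
    if "covers j i" "is_gap (A j) c d" "is_gap (A i) a b" "c \<le> a" "b \<le> d" for i j a b c d
  proof (rule gaps[rule_format])
    show "i < j \<and> \<not> (\<exists>k. i < k \<and> k < j) \<and> (c, d) \<in> gap_intervals (A j) \<and>
        (a, b) \<in> gap_intervals (A i) \<and> {a<..<b} \<subseteq> {c<..<d}"
      using that gap_intervals_iff_is_gap[OF cut_sets(1,2,4,5)] by (auto simp: covers_def)
  qed
  then show ?thesis
    using homotopy_cut_set_Inter[OF wd paths countable_index cut[rule_format] antitone limit] by blast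
qed

end
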